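(* For any $n\geq1$ and any abelian group $\mathsf A$, let $\coprod^n\mathsf A$ be the coproduct of $n$ copies of the one-object groupoid $\mathsf A$. Then $$\mathbb{S}ym\big(\textstyle\coprod^n\mathsf A\big)\simeq\mathsf A^n[1]\rtimes(\mathsf S_n\wr\mathsf{Aut}(\mathsf A))[0],$$ where $\mathsf S_n\wr\mathsf{Aut}(\mathsf A)$ acts on $\mathsf A^n$ by $(\sigma,(\phi_1,\dots,\phi_n))\lhd(a_1,\ldots,a_n)=(\phi_{\sigma^{-1}(1)}(a_{\sigma^{-1}(1)}),\ldots,\phi_{\sigma^{-1}(n)}(a_{\sigma^{-1}(n)}))$.
   Context: For a groupoid $\mathcal K$, $\mathbb{S}ym(\mathcal K)$ is the 2-group (monoidal groupoid with weakly invertible objects) of self-equivalences of $\mathcal K$ and natural isomorphisms, with tensor product composition. $\simeq$ denotes equivalence of 2-groups (monoidal functor with pseudo-inverse up to monoidal natural isomorphism). $\mathsf S_n\wr\mathsf H$ is the group $\mathsf S_n\times\mathsf H^n$ with product $(\sigma,\mathbf h)(\sigma',\mathbf h')=(\sigma\sigma',(\mathbf h\rhd\sigma')\mathbf h')$, $\mathbf h\rhd\sigma=(h_{\sigma(1)},\dots,h_{\sigma(n)})$. For a group $\mathsf G$ and left $\mathsf G$-module $\mathsf B$, $\mathsf B[1]\rtimes\mathsf G[0]$ is the strict 2-group with objects the elements of $\mathsf G$, morphisms $(b,g):g\to g$ ($b\in\mathsf B$), composition $(b',g)\circ(b,g)=(b'+b,g)$, tensor $g\otimes g'=gg'$, $(b,g)\otimes(b',g')=(b+g\lhd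 b',gg')$. *)

theory Defs
  imports Main "HOL-Combinatorics.Permutations"
begin

record ('o,'m) cat =
  cOb :: "'o set"
  cAr :: "'m set"
  cdom :: "'m \<Rightarrow> 'o"
  ccod :: "'m \<Rightarrow> 'o"
  ccomp :: "'m \<Rightarrow> 'm \<Rightarrow> 'm"   (* ccomp C g f = g o f, defined when ccod f = cdom g *)
  cid :: "'o \<Rightarrow> 'm"

definition arr_in :: "('o,'m,'x) cat_scheme \<Rightarrow> 'm \<Rightarrow> 'o \<Rightarrow> 'o \<Rightarrow> bool" where
  "arr_in C f a b \<longleftrightarrow> f \<in> cAr C \<and> cdom C f = a \<and> ccod C f = b"

definition is_iso :: "('o,'m,'x) cat_scheme \<Rightarrow> 'm \<Rightarrow> bool" where
  "is_iso C f \<longleftrightarrow> f \<in> cAr C \<and> (\<exists>g. arr_in C g (ccod C f) (cdom C f)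
       \<and> ccomp C g f = cid C (cdom C f) \<and> ccomp C f g = cid C (ccod C f))"

definition category :: "('o,'m,'x) cat_scheme \<Rightarrow> bool" where
  "category C \<longleftrightarrow>
     (\<forall>f\<in>cAr C. cdom C f \<in> cOb C \<and> ccod C f \<in> cOb C)
   \<and> (\<forall>x\<in>cOb C. arr_in C (cid C x) x x)
   \<and> (\<forall>f\<in>cAr C. \<forall>g\<in>cAr C. ccod C f = cdom C g \<longrightarrow>
          arr_in C (ccomp C g f) (cdom C f) (ccod C g))
   \<and> (\<forall>f\<in>cAr C. ccomp C (cid C (ccod C f)) f = f \<and> ccomp C f (cid C (cdom C f)) = f)
   \<and> (\<forall>f\<in>cAr C. \<forall>g\<in>cAr C. \<forall>h\<in>cAr C. ccod C f = cdom C g \<longrightarrow> ccod C g = cdom C h \<longrightarrow>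
          ccomp C h (ccomp C g f) = ccomp C (ccomp C h g) f)"

definition groupoid :: "('o,'m,'x) cat_scheme \<Rightarrow> bool" where
  "groupoid C \<longleftrightarrow> category C \<and> (\<forall>f\<in>cAr C. is_iso C f)"

definition "functor" :: "('o1,'m1,'x) cat_scheme \<Rightarrow> ('o2,'m2,'y) cat_scheme
    \<Rightarrow> ('o1 \<Rightarrow> 'o2) \<Rightarrow> ('m1 \<Rightarrow> 'm2) \<Rightarrow> bool" where
  "functor C D Fo Fm \<longleftrightarrow>
     (\<forall>x\<in>cOb C. Fo x \<in> cOb D)
   \<and> (\<forall>f\<in>cAr C. arr_in D (Fm f) (Fo (cdom C f)) (Fo (ccod C f)))
   \<and> (\<forall>x\<in>cOb C. Fm (cid C x) = cid D (Fo x))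
   \<and> (\<forall>f\<in>cAr C. \<forall>g\<in>cAr C. ccod C f = cdom C g \<longrightarrow>
          Fm (ccomp C g f) = ccomp D (Fm g) (Fm f))"

definition nat_trans :: "('o1,'m1,'x) cat_scheme \<Rightarrow> ('o2,'m2,'y) cat_scheme
    \<Rightarrow> ('o1 \<Rightarrow> 'o2) \<Rightarrow> ('m1 \<Rightarrow> 'm2) \<Rightarrow> ('o1 \<Rightarrow> 'o2) \<Rightarrow> ('m1 \<Rightarrow> 'm2)
    \<Rightarrow> ('o1 \<Rightarrow> 'm2) \<Rightarrow> bool" where
  "nat_trans C D Fo Fm Go Gm \<alpha> \<longleftrightarrow>
     (\<forall>x\<in>cOb C. arr_in D (\<alpha> x) (Fo x) (Go x))
   \<and> (\<forall>f\<in>cAr C. ccomp D (\<alpha> (ccod C f)) (Fm f) = ccomp D (Gm f) (\<alpha> (cdom C f)))"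

definition nat_iso :: "('o1,'m1,'x) cat_scheme \<Rightarrow> ('o2,'m2,'y) cat_scheme
    \<Rightarrow> ('o1 \<Rightarrow> 'o2) \<Rightarrow> ('m1 \<Rightarrow> 'm2) \<Rightarrow> ('o1 \<Rightarrow> 'o2) \<Rightarrow> ('m1 \<Rightarrow> 'm2)
    \<Rightarrow> ('o1 \<Rightarrow> 'm2) \<Rightarrow> bool" where
  "nat_iso C D Fo Fm Go Gm \<alpha> \<longleftrightarrow>
     nat_trans C D Fo Fm Go Gm \<alpha> \<and> (\<forall>x\<in>cOb C. is_iso D (\<alpha> x))"

definition self_equiv :: "('o,'m,'x) cat_scheme \<Rightarrow> ('o \<Rightarrow> 'o) \<Rightarrow> ('m \<Rightarrow> 'm) \<Rightarrow> bool" where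
  "self_equiv C Fo Fm \<longleftrightarrow> functor C C Fo Fm \<and>
     (\<exists>Go Gm \<alpha> \<beta>. functor C C Go Gm
        \<and> nat_iso C C (Go \<circ> Fo) (Gm \<circ> Fm) id id \<alpha>
        \<and> nat_iso C C (Fo \<circ> Go) (Fm \<circ> Gm) id id \<beta>)"

record ('o,'m) smc = "('o,'m) cat" +
  tob :: "'o \<Rightarrow> 'o \<Rightarrow> 'o"
  tar :: "'m \<Rightarrow> 'm \<Rightarrow> 'm"
  unt :: "'o"

definition strict_monoidal :: "('o,'m,'x) smc_scheme \<Rightarrow> bool" where
  "strict_monoidal C \<longleftrightarrow> category C \<and> unt C \<in> cOb C
   \<and> (\<forall>x\<in>cOb C. \<forall>y\<in>cOb C. tob C x y \<in> cOb C)
   \<and> (\<forall>f\<in>cAr C. \<forall>g\<in>cAr C. arr_in C (tar C f g) (tob C (cdom C f) (cdom C g))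
                                              (tob C (ccod C f) (ccod C g)))
   \<and> (\<forall>x\<in>cOb C. \<forall>y\<in>cOb C. tar C (cid C x) (cid C y) = cid C (tob C x y))
   \<and> (\<forall>f\<in>cAr C. \<forall>f'\<in>cAr C. \<forall>g\<in>cAr C. \<forall>g'\<in>cAr C.
        ccod C f = cdom C f' \<longrightarrow> ccod C g = cdom C g' \<longrightarrow>
        tar C (ccomp C f' f) (ccomp C g' g) = ccomp C (tar C f' g') (tar C f g))
   \<and> (\<forall>x\<in>cOb C. \<forall>y\<in>cOb C. \<forall>z\<in>cOb C. tob C (tob C x y) z = tob C x (tob C y z))
   \<and> (\<forall>f\<in>cAr C. \<forall>g\<in>cAr C. \<forall>h\<in>cAr C. tar C (tar C f g) h = tar C f (tar C g h))
   \<and> (\<forall>x\<in>cOb C. tob C (unt C) x = x \<and> tob C x (unt C) = x)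
   \<and> (\<forall>f\<in>cAr C. tar C (cid C (unt C)) f = f \<and> tar C f (cid C (unt C)) = f)"

definition strict_2group :: "('o,'m,'x) smc_scheme \<Rightarrow> bool" where
  "strict_2group C \<longleftrightarrow> strict_monoidal C \<and> groupoid C
   \<and> (\<forall>x\<in>cOb C. \<exists>y\<in>cOb C. (\<exists>f. arr_in C f (tob C x y) (unt C))
                            \<and> (\<exists>g. arr_in C g (tob C y x) (unt C)))"

definition mon_functor :: "('o1,'m1,'x) smc_scheme \<Rightarrow> ('o2,'m2,'y) smc_scheme
    \<Rightarrow> ('o1 \<Rightarrow> 'o2) \<Rightarrow> ('m1 \<Rightarrow> 'm2) \<Rightarrow> ('o1 \<Rightarrow> 'o1 \<Rightarrow> 'm2) \<Rightarrow> 'm2 \<Rightarrow> bool" where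
  "mon_functor C D Fo Fm \<mu> \<epsilon> \<longleftrightarrow> functor C D Fo Fm
   \<and> (\<forall>x\<in>cOb C. \<forall>y\<in>cOb C. arr_in D (\<mu> x y) (tob D (Fo x) (Fo y)) (Fo (tob C x y))
                           \<and> is_iso D (\<mu> x y))
   \<and> arr_in D \<epsilon> (unt D) (Fo (unt C)) \<and> is_iso D \<epsilon>
   \<and> (\<forall>f\<in>cAr C. \<forall>g\<in>cAr C.
        ccomp D (Fm (tar C f g)) (\<mu> (cdom C f) (cdom C g))
        = ccomp D (\<mu> (ccod C f) (ccod C g)) (tar D (Fm f) (Fm g)))
   \<and> (\<forall>x\<in>cOb C. \<forall>y\<in>cOb C. \<forall>z\<in>cOb C.
        ccomp D (\<mu> (tob C x y) z) (tar D (\<mu> x y) (cid D (Fo z)))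
        = ccomp D (\<mu> x (tob C y z)) (tar D (cid D (Fo x)) (\<mu> y z)))
   \<and> (\<forall>x\<in>cOb C. ccomp D (\<mu> (unt C) x) (tar D \<epsilon> (cid D (Fo x))) = cid D (Fo x))
   \<and> (\<forall>x\<in>cOb C. ccomp D (\<mu> x (unt C)) (tar D (cid D (Fo x)) \<epsilon>) = cid D (Fo x))"

definition mon_nat_iso :: "('o1,'m1,'x) smc_scheme \<Rightarrow> ('o2,'m2,'y) smc_scheme
    \<Rightarrow> ('o1 \<Rightarrow> 'o2) \<Rightarrow> ('m1 \<Rightarrow> 'm2) \<Rightarrow> ('o1 \<Rightarrow> 'o1 \<Rightarrow> 'm2) \<Rightarrow> 'm2
    \<Rightarrow> ('o1 \<Rightarrow> 'o2) \<Rightarrow> ('m1 \<Rightarrow> 'm2) \<Rightarrow> ('o1 \<Rightarrow> 'o1 \<Rightarrow> 'm2) \<Rightarrow> 'm2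
    \<Rightarrow> ('o1 \<Rightarrow> 'm2) \<Rightarrow> bool" where
  "mon_nat_iso C D Fo Fm \<mu> \<epsilon> Go Gm \<nu> \<eta> \<theta> \<longleftrightarrow> nat_iso C D Fo Fm Go Gm \<theta>
   \<and> (\<forall>x\<in>cOb C. \<forall>y\<in>cOb C.
        ccomp D (\<theta> (tob C x y)) (\<mu> x y) = ccomp D (\<nu> x y) (tar D (\<theta> x) (\<theta> y)))
   \<and> ccomp D (\<theta> (unt C)) \<epsilon> = \<eta>"

definition equiv_2group :: "('o1,'m1,'x) smc_scheme \<Rightarrow> ('o2,'m2,'y) smc_scheme \<Rightarrow> bool" where
  "equiv_2group C D \<longleftrightarrow> strict_2group C \<and> strict_2group D \<and>
    (\<exists>Fo Fm \<mu> \<epsilon> Go Gm \<nu> \<eta> \<theta> \<kappa>.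
        mon_functor C D Fo Fm \<mu> \<epsilon> \<and> mon_functor D C Go Gm \<nu> \<eta>
      \<and> mon_nat_iso C C (Go \<circ> Fo) (Gm \<circ> Fm)
            (\<lambda>x y. ccomp C (Gm (\<mu> x y)) (\<nu> (Fo x) (Fo y))) (ccomp C (Gm \<epsilon>) \<eta>)
            id id (\<lambda>x y. cid C (tob C x y)) (cid C (unt C)) \<theta>
      \<and> mon_nat_iso D D (Fo \<circ> Go) (Fm \<circ> Gm)
            (\<lambda>x y. ccomp D (Fm (\<nu> x y)) (\<mu> (Go x) (Go y))) (ccomp D (Fm \<eta>) \<epsilon>)
            id id (\<lambda>x y. cid D (tob D x y)) (cid D (unt D)) \<kappa>)"

text \<open>Objects: self-equivalences (Fo, Fm), extensional (undefined off the carriers).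
  Tensor: composition F * G = F o G; on morphisms horizontal composition.\<close>

definition fcomp :: "('o,'m,'x) cat_scheme \<Rightarrow> ('o \<Rightarrow> 'o) \<times> ('m \<Rightarrow> 'm)
     \<Rightarrow> ('o \<Rightarrow> 'o) \<times> ('m \<Rightarrow> 'm) \<Rightarrow> ('o \<Rightarrow> 'o) \<times> ('m \<Rightarrow> 'm)" where
  "fcomp K F G = (\<lambda>x. if x \<in> cOb K then fst F (fst G x) else undefined,
                  \<lambda>f. if f \<in> cAr K then snd F (snd G f) else undefined)"

definition Sym :: "('o,'m,'x) cat_scheme \<Rightarrow>
   (('o \<Rightarrow> 'o) \<times> ('m \<Rightarrow> 'm),
    (('o \<Rightarrow> 'o) \<times> ('m \<Rightarrow> 'm)) \<times> (('o \<Rightarrow> 'o) \<times> ('m \<Rightarrow> 'm)) \<times> ('o \<Rightarrow> 'm)) smc" where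
  "Sym K = \<lparr>
     cOb = {F. self_equiv K (fst F) (snd F)
               \<and> (\<forall>x. x \<notin> cOb K \<longrightarrow> fst F x = undefined)
               \<and> (\<forall>f. f \<notin> cAr K \<longrightarrow> snd F f = undefined)},
     cAr = {(F, G, \<alpha>). self_equiv K (fst F) (snd F)
               \<and> (\<forall>x. x \<notin> cOb K \<longrightarrow> fst F x = undefined)
               \<and> (\<forall>f. f \<notin> cAr K \<longrightarrow> snd F f = undefined)
               \<and> self_equiv K (fst G) (snd G)
               \<and> (\<forall>x. x \<notin> cOb K \<longrightarrow> fst G x = undefined)
               \<and> (\<forall>f. f \<notin> cAr K \<longrightarrow> snd G f = undefined)
               \<and> nat_iso K K (fst F) (snd F) (fst G) (snd G) \<alpha>
               \<and> (\<forall>x. x \<notin> cOb K \<longrightarrow> \<alpha> x = undefined)},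
     cdom = (\<lambda>(F, G, \<alpha>). F),
     ccod = (\<lambda>(F, G, \<alpha>). G),
     ccomp = (\<lambda>(G', H, \<beta>) (F, G, \<alpha>).
                (F, H, \<lambda>x. if x \<in> cOb K then ccomp K (\<beta> x) (\<alpha> x) else undefined)),
     cid = (\<lambda>F. (F, F, \<lambda>x. if x \<in> cOb K then cid K (fst F x) else undefined)),
     tob = fcomp K,
     tar = (\<lambda>(F, F', \<alpha>) (G, G', \<beta>).
              (fcomp K F G, fcomp K F' G',
               \<lambda>x. if x \<in> cOb K then ccomp K (\<alpha> (fst G' x)) (snd F (\<beta> x)) else undefined)),
     unt = (\<lambda>x. if x \<in> cOb K then x else undefined, \<lambda>f. if f \<in> cAr K then f else undefined)
   \<rparr>"

text \<open>Objects 0..n-1; morphisms (i, a) : i -> i for a in A; no morphisms between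
  distinct objects; composition is the group law of A.\<close>
definition coprod_grpd :: "nat \<Rightarrow> (nat, nat \<times> 'a::ab_group_add) cat" where
  "coprod_grpd n = \<lparr>
     cOb = {..<n},
     cAr = {f. fst f < n},
     cdom = fst,
     ccod = fst,
     ccomp = (\<lambda>g f. (fst f, snd g + snd f)),
     cid = (\<lambda>i. (i, 0))
   \<rparr>"

section \<open>The strict 2-group B[1] x| G[0]\<close>

definition semidirect_2group :: "'g set \<Rightarrow> ('g \<Rightarrow> 'g \<Rightarrow> 'g) \<Rightarrow> 'g
    \<Rightarrow> 'b set \<Rightarrow> ('b \<Rightarrow> 'b \<Rightarrow> 'b) \<Rightarrow> 'b \<Rightarrow> ('g \<Rightarrow> 'b \<Rightarrow> 'b) \<Rightarrow> ('g, 'b \<times> 'g) smc" where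
  "semidirect_2group Gc gmul gone Bc badd bzero act = \<lparr>
     cOb = Gc,
     cAr = Bc \<times> Gc,
     cdom = snd,
     ccod = snd,
     ccomp = (\<lambda>(b', g') (b, g). (badd b' b, g)),
     cid = (\<lambda>g. (bzero, g)),
     tob = gmul,
     tar = (\<lambda>(b, g) (b', g'). (badd b (act g b'), gmul g g')),
     unt = gone
   \<rparr>"

definition Aut :: "('a::ab_group_add \<Rightarrow> 'a) set" where
  "Aut = {\<phi>. bij \<phi> \<and> (\<forall>x y. \<phi> (x + y) = \<phi> x + \<phi> y)}"

text \<open>The wreath product S_n wr H, with S_n the permutations of {0..<n},
  H^n as functions nat => H equal to the unit outside {0..<n}.\<close>
definition wreath_car :: "nat \<Rightarrow> 'h set \<Rightarrow> 'h \<Rightarrow> ((nat \<Rightarrow> nat) \<times> (nat \<Rightarrow> 'h)) set" where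
  "wreath_car n Hc hone = {(\<sigma>, h). \<sigma> permutes {..<n} \<and> (\<forall>i<n. h i \<in> Hc) \<and> (\<forall>i\<ge>n. h i = hone)}"

definition wreath_mult :: "('h \<Rightarrow> 'h \<Rightarrow> 'h) \<Rightarrow> (nat \<Rightarrow> nat) \<times> (nat \<Rightarrow> 'h)
    \<Rightarrow> (nat \<Rightarrow> nat) \<times> (nat \<Rightarrow> 'h) \<Rightarrow> (nat \<Rightarrow> nat) \<times> (nat \<Rightarrow> 'h)" where
  "wreath_mult hmul x y = (fst x \<circ> fst y, \<lambda>i. hmul (snd x (fst y i)) (snd y i))"

text \<open>A^n as functions nat => A vanishing outside {0..<n}.\<close>
definition power_car :: "nat \<Rightarrow> (nat \<Rightarrow> 'a::ab_group_add) set" where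
  "power_car n = {a. \<forall>i\<ge>n. a i = 0}"

definition wreath_act :: "nat \<Rightarrow> (nat \<Rightarrow> nat) \<times> (nat \<Rightarrow> 'a \<Rightarrow> 'a)
    \<Rightarrow> (nat \<Rightarrow> 'a::ab_group_add) \<Rightarrow> (nat \<Rightarrow> 'a)" where
  "wreath_act n g a = (\<lambda>i. if i < n then snd g (inv (fst g) i) (a (inv (fst g) i)) else 0)"

definition target_2group :: "nat \<Rightarrow> 'a itself \<Rightarrow>
    ((nat \<Rightarrow> nat) \<times> (nat \<Rightarrow> 'a \<Rightarrow> 'a),
     (nat \<Rightarrow> 'a::ab_group_add) \<times> ((nat \<Rightarrow> nat) \<times> (nat \<Rightarrow> 'a \<Rightarrow> 'a))) smc" where
  "target_2group n _ = semidirect_2group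
     (wreath_car n (Aut :: ('a \<Rightarrow> 'a) set) id) (wreath_mult (\<circ>)) (id, \<lambda>i. id)
     (power_car n) (\<lambda>a b i. a i + b i) (\<lambda>i. 0) (wreath_act n)"

end

theory Submission
  imports Defs
begin

(*
  An endofunctor of the coproduct \<coprod>\<^sup>n A of n copies of the one-object groupoid A is, on the
  nose, a map of the n objects together with an endomorphism of A at each object; being a
  self-equivalence forces the map to be a permutation \<sigma> and the endomorphisms to be automorphisms
  \<phi>\<^sub>i. So the objects of Sym(\<coprod>\<^sup>n A) are exactly the elements (\<sigma>, \<phi>) of S\<^sub>n wr Aut(A). As there
  are no arrows between distinct objects and A is abelian, a natural isomorphism F \<Rightarrow> G exists
  only if F = G, and it is then a family of elements of A, one per object. This yields a strict
  monoidal functor from A\<^sup>n[1] \<rtimes> (S\<^sub>n wr Aut(A))[0] to Sym(\<coprod>\<^sup>n A) that is bijective on objects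
  and on arrows, i.e. an isomorphism of strict 2-groups, and in particular an equivalence.
*)

section \<open>Strict monoidal isomorphisms of strict 2-groups\<close>

definition strict_mon_functor :: "('o1,'m1,'x) smc_scheme \<Rightarrow> ('o2,'m2,'y) smc_scheme
    \<Rightarrow> ('o1 \<Rightarrow> 'o2) \<Rightarrow> ('m1 \<Rightarrow> 'm2) \<Rightarrow> bool" where
  "strict_mon_functor C D Fo Fm \<longleftrightarrow> (\<forall>x\<in>cOb C. Fo x \<in> cOb D)
   \<and> (\<forall>f\<in>cAr C. arr_in D (Fm f) (Fo (cdom C f)) (Fo (ccod C f)))
   \<and> (\<forall>f\<in>cAr C. \<forall>g\<in>cAr C. ccod C f = cdom C g \<longrightarrow> Fm (ccomp C g f) = ccomp D (Fm g) (Fm f))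
   \<and> (\<forall>x\<in>cOb C. Fm (cid C x) = cid D (Fo x))
   \<and> (\<forall>x\<in>cOb C. \<forall>y\<in>cOb C. Fo (tob C x y) = tob D (Fo x) (Fo y))
   \<and> (\<forall>f\<in>cAr C. \<forall>g\<in>cAr C. Fm (tar C f g) = tar D (Fm f) (Fm g))
   \<and> Fo (unt C) = unt D"

lemma category_arrD:
  assumes "category C" "f \<in> cAr C"
  shows "cdom C f \<in> cOb C" "ccod C f \<in> cOb C"
    "ccomp C (cid C (ccod C f)) f = f" "ccomp C f (cid C (cdom C f)) = f"
  using assms unfolding category_def by auto

lemma category_cidD:
  assumes "category C" "x \<in> cOb C"
  shows "cid C x \<in> cAr C" "cdom C (cid C x) = x" "ccod C (cid C x) = x"
    "ccomp C (cid C x) (cid C x) = cid C x" "is_iso C (cid C x)"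
proof -
  show 1: "cid C x \<in> cAr C" "cdom C (cid C x) = x" "ccod C (cid C x) = x"
    using assms unfolding category_def arr_in_def by auto
  then show 2: "ccomp C (cid C x) (cid C x) = cid C x"
    using category_arrD(3)[OF assms(1)] by metis
  show "is_iso C (cid C x)"
    unfolding is_iso_def arr_in_def using 1 2 by auto
qed

lemma strict_monoidalD:
  assumes "strict_monoidal C"
  shows "category C" "unt C \<in> cOb C"
    "\<And>x y. x \<in> cOb C \<Longrightarrow> y \<in> cOb C \<Longrightarrow> tob C x y \<in> cOb C"
    "\<And>f g. f \<in> cAr C \<Longrightarrow> g \<in> cAr C \<Longrightarrow> tar C f g \<in> cAr C"
    "\<And>f g. f \<in> cAr C \<Longrightarrow> g \<in> cAr C \<Longrightarrow> cdom C (tar C f g) = tob C (cdom C f) (cdom C g)"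
    "\<And>f g. f \<in> cAr C \<Longrightarrow> g \<in> cAr C \<Longrightarrow> ccod C (tar C f g) = tob C (ccod C f) (ccod C g)"
    "\<And>x y. x \<in> cOb C \<Longrightarrow> y \<in> cOb C \<Longrightarrow> tar C (cid C x) (cid C y) = cid C (tob C x y)"
    "\<And>x y z. x \<in> cOb C \<Longrightarrow> y \<in> cOb C \<Longrightarrow> z \<in> cOb C \<Longrightarrow>
       tob C (tob C x y) z = tob C x (tob C y z)"
    "\<And>x. x \<in> cOb C \<Longrightarrow> tob C (unt C) x = x"
    "\<And>x. x \<in> cOb C \<Longrightarrow> tob C x (unt C) = x"
  using assms unfolding strict_monoidal_def arr_in_def by auto

lemma strict_mon_functorD:
  assumes "strict_mon_functor C D Fo Fm"
  shows "\<And>x. x \<in> cOb C \<Longrightarrow> Fo x \<in> cOb D"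
    "\<And>f. f \<in> cAr C \<Longrightarrow> Fm f \<in> cAr D"
    "\<And>f. f \<in> cAr C \<Longrightarrow> cdom D (Fm f) = Fo (cdom C f)"
    "\<And>f. f \<in> cAr C \<Longrightarrow> ccod D (Fm f) = Fo (ccod C f)"
    "\<And>f g. f \<in> cAr C \<Longrightarrow> g \<in> cAr C \<Longrightarrow> ccod C f = cdom C g \<Longrightarrow>
       Fm (ccomp C g f) = ccomp D (Fm g) (Fm f)"
    "\<And>x. x \<in> cOb C \<Longrightarrow> Fm (cid C x) = cid D (Fo x)"
    "\<And>x y. x \<in> cOb C \<Longrightarrow> y \<in> cOb C \<Longrightarrow> Fo (tob C x y) = tob D (Fo x) (Fo y)"
    "\<And>f g. f \<in> cAr C \<Longrightarrow> g \<in> cAr C \<Longrightarrow> Fm (tar C f g) = tar D (Fm f) (Fm g)"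
    "Fo (unt C) = unt D"
  using assms unfolding strict_mon_functor_def arr_in_def by auto

lemma strict_mon_functor_mon_functor:
  assumes C: "strict_monoidal C" and D: "strict_monoidal D"
    and F: "strict_mon_functor C D Fo Fm"
  shows "mon_functor C D Fo Fm (\<lambda>x y. cid D (tob D (Fo x) (Fo y))) (cid D (unt D))"
proof -
  note C' = strict_monoidalD[OF C] and D' = strict_monoidalD[OF D]
  note F' = strict_mon_functorD[OF F]
  note cidD = category_cidD[OF D'(1)] and arrD = category_arrD[OF D'(1)]
  have "functor C D Fo Fm"
    unfolding functor_def arr_in_def using F' by auto
  moreover have "ccomp D (Fm (tar C f g)) (cid D (tob D (Fo (cdom C f)) (Fo (cdom C g))))
      = ccomp D (cid D (tob D (Fo (ccod C f)) (Fo (ccod C g)))) (tar D (Fm f) (Fm g))"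
    if "f \<in> cAr C" "g \<in> cAr C" for f g
    using that arrD(3,4)[of "tar D (Fm f) (Fm g)"] by (simp add: F' D')
  ultimately show ?thesis
    unfolding mon_functor_def arr_in_def using C' D'
    by (auto simp: F' cidD D'(7,8) C'(3))
qed

lemma strict_mon_functor_inverse_mon_nat_iso:
  assumes C: "strict_monoidal C"
    and F: "strict_mon_functor C D Fo Fm" and G: "strict_mon_functor D C Go Gm"
    and inv_ob: "\<And>x. x \<in> cOb C \<Longrightarrow> Go (Fo x) = x"
    and inv_ar: "\<And>f. f \<in> cAr C \<Longrightarrow> Gm (Fm f) = f"
  shows "mon_nat_iso C C (Go \<circ> Fo) (Gm \<circ> Fm)
            (\<lambda>x y. ccomp C (Gm (cid D (tob D (Fo x) (Fo y)))) (cid C (tob C (Go (Fo x)) (Go (Fo y)))))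
            (ccomp C (Gm (cid D (unt D))) (cid C (unt C)))
            id id (\<lambda>x y. cid C (tob C x y)) (cid C (unt C)) (cid C)"
proof -
  note C' = strict_monoidalD[OF C]
  note F' = strict_mon_functorD[OF F] and G' = strict_mon_functorD[OF G]
  note cidC = category_cidD[OF C'(1)] and arrC = category_arrD[OF C'(1)]
  have GF_cid: "Gm (cid D (Fo x)) = cid C x" if "x \<in> cOb C" for x
    using that by (simp add: F' G' inv_ob)
  have GF_tob: "Gm (cid D (tob D (Fo x) (Fo y))) = cid C (tob C x y)"
    if "x \<in> cOb C" "y \<in> cOb C" for x y
    using that GF_cid[of "tob C x y"] by (simp add: F' C'(3))
  have GF_unt: "Gm (cid D (unt D)) = cid C (unt C)"
    using GF_cid[OF C'(2)] by (simp add: F'(9))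
  show ?thesis
    unfolding mon_nat_iso_def nat_iso_def nat_trans_def arr_in_def
    using C'(2,3) by (auto simp: cidC arrC C'(7) inv_ob inv_ar GF_tob GF_unt)
qed

lemma equiv_2group_of_strict_iso:
  assumes C: "strict_2group C" and D: "strict_2group D"
    and F: "strict_mon_functor C D Fo Fm" and G: "strict_mon_functor D C Go Gm"
    and "\<And>x. x \<in> cOb C \<Longrightarrow> Go (Fo x) = x" and "\<And>f. f \<in> cAr C \<Longrightarrow> Gm (Fm f) = f"
    and "\<And>x. x \<in> cOb D \<Longrightarrow> Fo (Go x) = x" and "\<And>f. f \<in> cAr D \<Longrightarrow> Fm (Gm f) = f"
  shows "equiv_2group C D"
proof -
  have C': "strict_monoidal C" and D': "strict_monoidal D"
    using C D unfolding strict_2group_def by auto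
  show ?thesis
    unfolding equiv_2group_def
    using C D strict_mon_functor_mon_functor[OF C' D' F] strict_mon_functor_mon_functor[OF D' C' G]
      strict_mon_functor_inverse_mon_nat_iso[OF C' F G] strict_mon_functor_inverse_mon_nat_iso[OF D' G F]
      assms(5-8) by blast
qed

lemma strict_2group_transport:
  assumes D: "strict_2group D" and G: "strict_mon_functor D C Go Gm"
    and ob: "bij_betw Go (cOb D) (cOb C)" and ar: "bij_betw Gm (cAr D) (cAr C)"
  shows "strict_2group C"
proof -
  have obC: "cOb C = Go ` cOb D" and arC: "cAr C = Gm ` cAr D"
    using ob ar by (auto simp: bij_betw_def)
  have inj_ob: "Go x = Go y \<longleftrightarrow> x = y" if "x \<in> cOb D" "y \<in> cOb D" for x y
    using ob that by (auto simp: bij_betw_def inj_on_def)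
  note G0 = strict_mon_functorD[OF G]
  note G' = G0(1-4) G0(5-9)[symmetric]
  note Dd = D[unfolded strict_2group_def strict_monoidal_def groupoid_def category_def
      is_iso_def arr_in_def]
  have cat: "category C"
    unfolding category_def arr_in_def obC arC using Dd by (auto simp: G' inj_ob)
  have "is_iso C (Gm f)" if f: "f \<in> cAr D" for f
  proof -
    obtain g where g: "g \<in> cAr D" "cdom D g = ccod D f" "ccod D g = cdom D f"
      "ccomp D g f = cid D (cdom D f)" "ccomp D f g = cid D (ccod D f)"
      using f Dd by metis
    moreover have "cdom D f \<in> cOb D" "ccod D f \<in> cOb D" using f Dd by auto
    ultimately show ?thesis
      unfolding is_iso_def arr_in_def using f by (auto simp: G' intro!: exI[of _ "Gm g"])
  qed
  then have "groupoid C"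
    unfolding groupoid_def using cat arC by auto
  moreover have "strict_monoidal C"
    unfolding strict_monoidal_def arr_in_def obC arC using Dd cat by (auto simp: G' inj_ob)
  moreover have "\<exists>y\<in>cOb C. (\<exists>f. arr_in C f (tob C (Go x) y) (unt C))
      \<and> (\<exists>g. arr_in C g (tob C y (Go x)) (unt C))" if x: "x \<in> cOb D" for x
  proof -
    obtain y f g where "y \<in> cOb D" "arr_in D f (tob D x y) (unt D)" "arr_in D g (tob D y x) (unt D)"
      using x D unfolding strict_2group_def by metis
    then show ?thesis
      using x by (intro bexI[of _ "Go y"] conjI exI[of _ "Gm f"] exI[of _ "Gm g"])
        (auto simp: arr_in_def G' obC)
  qed
  ultimately show ?thesis
    unfolding strict_2group_def obC by blast
qed

lemma strict_mon_functor_inv_into: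
  assumes D: "strict_monoidal D" and G: "strict_mon_functor D C Go Gm"
    and ob: "bij_betw Go (cOb D) (cOb C)" and ar: "bij_betw Gm (cAr D) (cAr C)"
  shows "strict_mon_functor C D (inv_into (cOb D) Go) (inv_into (cAr D) Gm)"
proof -
  define Fo where "Fo = inv_into (cOb D) Go"
  define Fm where "Fm = inv_into (cAr D) Gm"
  have Fo: "Fo x \<in> cOb D" "Go (Fo x) = x" if "x \<in> cOb C" for x
    using that ob unfolding Fo_def by (auto simp: bij_betw_def inv_into_into f_inv_into_f)
  have Fm: "Fm f \<in> cAr D" "Gm (Fm f) = f" if "f \<in> cAr C" for f
    using that ar unfolding Fm_def by (auto simp: bij_betw_def inv_into_into f_inv_into_f)
  have Fo_eqI: "Fo x = y" if "y \<in> cOb D" "Go y = x" for x y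
    using that ob unfolding Fo_def by (auto simp: bij_betw_def inv_into_f_eq)
  have Fm_eqI: "Fm f = g" if "g \<in> cAr D" "Gm g = f" for f g
    using that ar unfolding Fm_def by (auto simp: bij_betw_def inv_into_f_eq)
  note D' = strict_monoidalD[OF D] and G' = strict_mon_functorD[OF G]
  note arrD = category_arrD[OF D'(1)] and cidD = category_cidD[OF D'(1)]
  have dom: "cdom D (Fm f) = Fo (cdom C f)" and cod: "ccod D (Fm f) = Fo (ccod C f)"
    if "f \<in> cAr C" for f
    using that G'(3,4)[OF Fm(1)] by (auto intro!: Fo_eqI[symmetric] simp: Fm arrD)
  have "Fm (ccomp C g f) = ccomp D (Fm g) (Fm f)"
    if "f \<in> cAr C" "g \<in> cAr C" "ccod C f = cdom C g" for f g
  proof -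
    have "ccod D (Fm f) = cdom D (Fm g)" using that by (simp add: dom cod)
    with that show ?thesis
      by (intro Fm_eqI) (auto simp: Fm G' D'(1)[unfolded category_def arr_in_def])
  qed
  moreover have "Fm (cid C x) = cid D (Fo x)" if "x \<in> cOb C" for x
    using that by (intro Fm_eqI) (auto simp: Fo cidD G')
  moreover have "Fo (tob C x y) = tob D (Fo x) (Fo y)" if "x \<in> cOb C" "y \<in> cOb C" for x y
    using that by (intro Fo_eqI) (auto simp: Fo D' G')
  moreover have "Fm (tar C f g) = tar D (Fm f) (Fm g)" if "f \<in> cAr C" "g \<in> cAr C" for f g
    using that by (intro Fm_eqI) (auto simp: Fm D' G')
  moreover have "Fo (unt C) = unt D"
    by (intro Fo_eqI) (auto simp: D' G')
  ultimately show ?thesis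
    unfolding strict_mon_functor_def arr_in_def Fo_def[symmetric] Fm_def[symmetric]
    by (auto simp: Fo Fm dom cod)
qed

lemma equiv_2group_of_bij_strict_mon_functor:
  assumes D: "strict_2group D" and G: "strict_mon_functor D C Go Gm"
    and ob: "bij_betw Go (cOb D) (cOb C)" and ar: "bij_betw Gm (cAr D) (cAr C)"
  shows "equiv_2group C D"
proof (rule equiv_2group_of_strict_iso[OF strict_2group_transport[OF D G ob ar] D _ G])
  show "strict_mon_functor C D (inv_into (cOb D) Go) (inv_into (cAr D) Gm)"
    using D G ob ar by (intro strict_mon_functor_inv_into) (auto simp: strict_2group_def)
qed (use ob ar in \<open>auto simp: bij_betw_def f_inv_into_f\<close>)

section \<open>The strict 2-group B[1] \<rtimes> G[0]\<close>

definition group_on :: "'g set \<Rightarrow> ('g \<Rightarrow> 'g \<Rightarrow> 'g) \<Rightarrow> 'g \<Rightarrow> bool" where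
  "group_on G mul one \<longleftrightarrow> one \<in> G \<and> (\<forall>x\<in>G. \<forall>y\<in>G. mul x y \<in> G)
   \<and> (\<forall>x\<in>G. \<forall>y\<in>G. \<forall>z\<in>G. mul (mul x y) z = mul x (mul y z))
   \<and> (\<forall>x\<in>G. mul one x = x \<and> mul x one = x)
   \<and> (\<forall>x\<in>G. \<exists>y\<in>G. mul x y = one \<and> mul y x = one)"

definition ab_group_on :: "'b set \<Rightarrow> ('b \<Rightarrow> 'b \<Rightarrow> 'b) \<Rightarrow> 'b \<Rightarrow> bool" where
  "ab_group_on B add zero \<longleftrightarrow> group_on B add zero \<and> (\<forall>x\<in>B. \<forall>y\<in>B. add x y = add y x)"

definition module_on :: "'g set \<Rightarrow> ('g \<Rightarrow> 'g \<Rightarrow> 'g) \<Rightarrow> 'g \<Rightarrow> 'b set \<Rightarrow> ('b \<Rightarrow> 'b \<Rightarrow> 'b)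
    \<Rightarrow> ('g \<Rightarrow> 'b \<Rightarrow> 'b) \<Rightarrow> bool" where
  "module_on G mul one B add act \<longleftrightarrow> (\<forall>g\<in>G. \<forall>b\<in>B. act g b \<in> B)
   \<and> (\<forall>g\<in>G. \<forall>b\<in>B. \<forall>b'\<in>B. act g (add b b') = add (act g b) (act g b'))
   \<and> (\<forall>g\<in>G. \<forall>g'\<in>G. \<forall>b\<in>B. act (mul g g') b = act g (act g' b))
   \<and> (\<forall>b\<in>B. act one b = b)"

lemma group_onD:
  assumes "group_on G mul one"
  shows "one \<in> G" "\<And>x y. x \<in> G \<Longrightarrow> y \<in> G \<Longrightarrow> mul x y \<in> G"
    "\<And>x y z. x \<in> G \<Longrightarrow> y \<in> G \<Longrightarrow> z \<in> G \<Longrightarrow> mul (mul x y) z = mul x (mul y z)"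
    "\<And>x. x \<in> G \<Longrightarrow> mul one x = x" "\<And>x. x \<in> G \<Longrightarrow> mul x one = x"
    "\<And>x. x \<in> G \<Longrightarrow> \<exists>y\<in>G. mul x y = one \<and> mul y x = one"
  using assms unfolding group_on_def by auto

lemma module_onD:
  assumes "module_on G mul one B add act"
  shows "\<And>g b. g \<in> G \<Longrightarrow> b \<in> B \<Longrightarrow> act g b \<in> B"
    "\<And>g b b'. g \<in> G \<Longrightarrow> b \<in> B \<Longrightarrow> b' \<in> B \<Longrightarrow> act g (add b b') = add (act g b) (act g b')"
    "\<And>g g' b. g \<in> G \<Longrightarrow> g' \<in> G \<Longrightarrow> b \<in> B \<Longrightarrow> act (mul g g') b = act g (act g' b)"
    "\<And>b. b \<in> B \<Longrightarrow> act one b = b"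
  using assms unfolding module_on_def by auto

lemma group_on_idem_eq_one:
  assumes G: "group_on G mul one" and x: "x \<in> G" "mul x x = x"
  shows "x = one"
proof -
  note G' = group_onD[OF G]
  obtain y where y: "y \<in> G" "mul x y = one"
    using G'(6)[OF x(1)] by blast
  have "x = mul x (mul x y)"
    using G'(5)[OF x(1)] y(2) by simp
  also have "\<dots> = mul (mul x x) y"
    using G'(3)[OF x(1) x(1) y(1)] by simp
  also have "\<dots> = one"
    using x(2) y(2) by simp
  finally show ?thesis .
qed

lemma module_on_act_zero:
  assumes B: "ab_group_on B add zero" and act: "module_on G mul one B add act" and g: "g \<in> G"
  shows "act g zero = zero"
proof -
  have grp: "group_on B add zero"
    using B unfolding ab_group_on_def by blast
  have zero: "zero \<in> B" "add zero zero = zero"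
    using group_onD(1,4)[OF grp] by blast+
  have "add (act g zero) (act g zero) = act g zero"
    using module_onD(2)[OF act g zero(1) zero(1)] unfolding zero(2) by (rule sym)
  then show ?thesis
    by (rule group_on_idem_eq_one[OF grp module_onD(1)[OF act g zero(1)]])
qed

lemma strict_2group_semidirect_2group:
  assumes G: "group_on Gc gmul gone" and B: "ab_group_on Bc badd bzero"
    and act: "module_on Gc gmul gone Bc badd act"
  shows "strict_2group (semidirect_2group Gc gmul gone Bc badd bzero act)"
    (is "strict_2group ?C")
proof -
  have B0: "group_on Bc badd bzero" and comm: "\<And>x y. x \<in> Bc \<Longrightarrow> y \<in> Bc \<Longrightarrow> badd x y = badd y x"
    using B unfolding ab_group_on_def by auto
  note G' = group_onD[OF G] and B' = group_onD[OF B0] and act' = module_onD[OF act]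
    and act_zero = module_on_act_zero[OF B act]
  \<comment> \<open>Commutativity of B is what the interchange law needs.\<close>
  have left_comm: "badd x (badd y z) = badd y (badd x z)" if "x \<in> Bc" "y \<in> Bc" "z \<in> Bc" for x y z
    using that by (metis B'(3) comm)
  have simps: "cOb ?C = Gc" "cAr ?C = Bc \<times> Gc" "cdom ?C = snd" "ccod ?C = snd"
    "ccomp ?C (b', g') (b, g) = (badd b' b, g)" "cid ?C g = (bzero, g)" "tob ?C = gmul"
    "tar ?C (b, g) (b', g') = (badd b (act g b'), gmul g g')" "unt ?C = gone"
    for b b' g g' by (simp_all add: semidirect_2group_def)
  have cat: "category ?C"
    unfolding category_def arr_in_def by (auto simp: simps G'(1-5) B'(1-5))
  have "is_iso ?C f" if f_ar: "f \<in> cAr ?C" for f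
  proof -
    obtain b g where f: "f = (b, g)" "b \<in> Bc" "g \<in> Gc"
      using f_ar by (cases f) (auto simp: simps)
    obtain b' where "b' \<in> Bc" "badd b b' = bzero" "badd b' b = bzero"
      using B'(6)[OF f(2)] by blast
    then show ?thesis
      unfolding is_iso_def arr_in_def f using f by (auto simp: simps intro!: exI[of _ "(b', g)"])
  qed
  then have "groupoid ?C"
    unfolding groupoid_def using cat by blast
  moreover have "strict_monoidal ?C"
    unfolding strict_monoidal_def arr_in_def
    by (auto simp: cat simps G'(1-5) B'(1-5) act'(1-4) act_zero left_comm)
  moreover have "\<exists>y\<in>cOb ?C. (\<exists>f. arr_in ?C f (tob ?C x y) (unt ?C))
      \<and> (\<exists>f. arr_in ?C f (tob ?C y x) (unt ?C))" if x_ob: "x \<in> cOb ?C" for x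
  proof -
    obtain y where "y \<in> Gc" "gmul x y = gone" "gmul y x = gone"
      using G'(6)[of x] x_ob by (auto simp: simps)
    then show ?thesis
      unfolding arr_in_def using B'(1) G'(1) by (auto simp: simps)
  qed
  ultimately show ?thesis
    unfolding strict_2group_def by blast
qed

section \<open>The wreath product S_n wr Aut(A) acting on A^n\<close>

lemma Aut_add: "\<phi> \<in> Aut \<Longrightarrow> \<phi> (x + y) = \<phi> x + \<phi> y"
  unfolding Aut_def by auto

lemma Aut_zero: "\<phi> \<in> Aut \<Longrightarrow> \<phi> 0 = 0"
  using Aut_add[of \<phi> 0 0] by simp

lemma Aut_bij: "\<phi> \<in> Aut \<Longrightarrow> bij \<phi>"
  unfolding Aut_def by auto

lemma id_in_Aut: "id \<in> Aut"
  unfolding Aut_def by auto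

lemma Aut_comp: "\<phi> \<in> Aut \<Longrightarrow> \<psi> \<in> Aut \<Longrightarrow> \<phi> \<circ> \<psi> \<in> Aut"
  unfolding Aut_def by (auto intro: bij_comp)

lemma Aut_inv: "\<phi> \<in> Aut \<Longrightarrow> inv \<phi> \<in> Aut"
proof -
  assume \<phi>: "\<phi> \<in> Aut"
  have "inv \<phi> (x + y) = inv \<phi> x + inv \<phi> y" for x y
  proof -
    have "\<phi> (inv \<phi> x + inv \<phi> y) = x + y"
      using Aut_bij[OF \<phi>] by (simp add: Aut_add[OF \<phi>] bij_is_surj surj_f_inv_f)
    then show ?thesis using Aut_bij[OF \<phi>] by (metis bij_inv_eq_iff)
  qed
  then show ?thesis
    unfolding Aut_def using Aut_bij[OF \<phi>] by (simp add: bij_imp_bij_inv)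
qed

lemma permutes_lessThan_iff: "\<sigma> permutes {..<n} \<Longrightarrow> \<sigma> i < n \<longleftrightarrow> i < n"
  using permutes_in_image[of \<sigma> "{..<n}" i] by simp

lemma mem_wreath_car:
  "(\<sigma>, h) \<in> wreath_car n Hc hone \<longleftrightarrow> \<sigma> permutes {..<n} \<and> (\<forall>i<n. h i \<in> Hc) \<and> (\<forall>i\<ge>n. h i = hone)"
  unfolding wreath_car_def by auto

lemma wreath_mult_comp: "wreath_mult (\<circ>) (\<sigma>, h) (\<sigma>', h') = (\<sigma> \<circ> \<sigma>', \<lambda>i. h (\<sigma>' i) \<circ> h' i)"
  unfolding wreath_mult_def by simp

lemma wreath_mult_in_wreath_car:
  assumes "(\<sigma>, h) \<in> wreath_car n Aut id" and "(\<sigma>', h') \<in> wreath_car n Aut id"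
  shows "wreath_mult (\<circ>) (\<sigma>, h) (\<sigma>', h') \<in> wreath_car n Aut id"
  using assms unfolding wreath_mult_comp mem_wreath_car
  by (auto simp: permutes_lessThan_iff permutes_not_in intro: Aut_comp permutes_compose)

lemma wreath_one_in_wreath_car: "(id, \<lambda>i. id) \<in> wreath_car n Aut id"
  unfolding mem_wreath_car by (auto simp: id_in_Aut)

type_synonym 'a wreath = "(nat \<Rightarrow> nat) \<times> (nat \<Rightarrow> 'a \<Rightarrow> 'a)"

definition wreath_inv :: "'a wreath \<Rightarrow> 'a wreath" where
  "wreath_inv g = (inv (fst g), \<lambda>i. inv (snd g (inv (fst g) i)))"

lemma wreath_inv:
  assumes g: "g \<in> wreath_car n (Aut :: ('a::ab_group_add \<Rightarrow> 'a) set) id"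
  shows "wreath_inv g \<in> wreath_car n Aut id"
    and "wreath_mult (\<circ>) g (wreath_inv g) = (id, \<lambda>i. id)"
    and "wreath_mult (\<circ>) (wreath_inv g) g = (id, \<lambda>i. id)"
proof -
  obtain \<sigma> h where g_eq: "g = (\<sigma>, h)" and \<sigma>: "\<sigma> permutes {..<n}"
    and h: "\<forall>i<n. h i \<in> Aut" "\<forall>i\<ge>n. h i = id"
    using g by (cases g) (auto simp: mem_wreath_car)
  have "bij (h i)" for i
    using h Aut_bij[of "h i"] by (cases "i < n") auto
  then show "wreath_mult (\<circ>) g (wreath_inv g) = (id, \<lambda>i. id)"
    "wreath_mult (\<circ>) (wreath_inv g) g = (id, \<lambda>i. id)"
    unfolding g_eq wreath_inv_def wreath_mult_comp using permutes_inv_o[OF \<sigma>]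
    by (auto simp: fun_eq_iff permutes_inverses[OF \<sigma>] bij_is_surj surj_f_inv_f bij_is_inj inv_f_f)
  show "wreath_inv g \<in> wreath_car n Aut id"
    unfolding g_eq wreath_inv_def mem_wreath_car
    using h permutes_lessThan_iff[OF permutes_inv[OF \<sigma>]] permutes_not_in[OF permutes_inv[OF \<sigma>]]
    by (auto simp: permutes_inv[OF \<sigma>] Aut_inv)
qed

lemma wreath_act_pair:
  "wreath_act n (\<sigma>, h) a = (\<lambda>i. if i < n then h (inv \<sigma> i) (a (inv \<sigma> i)) else 0)"
  unfolding wreath_act_def by (rule ext) simp

lemma wreath_act_in_power_car: "wreath_act n g a \<in> power_car n"
  unfolding wreath_act_def power_car_def by auto

lemma wreath_act_add:
  assumes "(\<sigma>, h) \<in> wreath_car n Aut id"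
  shows "wreath_act n (\<sigma>, h) (\<lambda>i. a i + b i) = (\<lambda>i. wreath_act n (\<sigma>, h) a i + wreath_act n (\<sigma>, h) b i)"
  using assms unfolding wreath_act_pair mem_wreath_car
  by (auto simp: permutes_lessThan_iff[OF permutes_inv] Aut_add)

lemma wreath_act_one: "a \<in> power_car n \<Longrightarrow> wreath_act n (id, \<lambda>i. id) a = a"
  unfolding wreath_act_pair power_car_def by auto

lemma wreath_act_mult:
  assumes "\<sigma> permutes {..<n}" and "\<sigma>' permutes {..<n}"
  shows "wreath_act n (wreath_mult (\<circ>) (\<sigma>, h) (\<sigma>', h')) a
    = wreath_act n (\<sigma>, h) (wreath_act n (\<sigma>', h') a)"
  unfolding wreath_mult_comp wreath_act_pair
    o_inv_distrib[OF permutes_bij[OF assms(1)] permutes_bij[OF assms(2)]]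
  using assms by (auto simp: permutes_lessThan_iff[OF permutes_inv] permutes_inverses[OF assms(2)])

lemma group_on_wreath_car:
  "group_on (wreath_car n (Aut :: ('a::ab_group_add \<Rightarrow> 'a) set) id) (wreath_mult (\<circ>)) (id, \<lambda>i. id)"
proof -
  have "wreath_mult (\<circ>) x y \<in> wreath_car n Aut id"
    if "x \<in> wreath_car n (Aut :: ('a \<Rightarrow> 'a) set) id" "y \<in> wreath_car n Aut id" for x y
    using that by (cases x, cases y) (simp add: wreath_mult_in_wreath_car)
  moreover have "wreath_mult (\<circ>) (wreath_mult (\<circ>) x y) z = wreath_mult (\<circ>) x (wreath_mult (\<circ>) y z)"
    for x y z :: "'a wreath"
    by (cases x, cases y, cases z) (simp add: wreath_mult_comp comp_assoc)
  moreover have "wreath_mult (\<circ>) (id, \<lambda>i. id) x = x" "wreath_mult (\<circ>) x (id, \<lambda>i. id) = x"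
    for x :: "'a wreath"
    by (cases x, simp add: wreath_mult_comp)+
  ultimately show ?thesis
    unfolding group_on_def using wreath_one_in_wreath_car wreath_inv by blast
qed

lemma ab_group_on_power_car:
  "ab_group_on (power_car n :: (nat \<Rightarrow> 'a::ab_group_add) set) (\<lambda>a b i. a i + b i) (\<lambda>i. 0)"
proof -
  have "\<exists>b\<in>power_car n. (\<lambda>i. a i + b i) = (\<lambda>i. 0) \<and> (\<lambda>i. b i + a i) = (\<lambda>i. 0)"
    if "a \<in> power_car n" for a :: "nat \<Rightarrow> 'a"
    using that by (intro bexI[of _ "\<lambda>i. - a i"]) (auto simp: power_car_def)
  moreover have "(\<lambda>i. 0) \<in> power_car n" "\<And>a b. a \<in> power_car n \<Longrightarrow> b \<in> power_car n \<Longrightarrow> (\<lambda>i. a i + b i) \<in> power_car n"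
    by (simp_all add: power_car_def)
  ultimately show ?thesis
    unfolding ab_group_on_def group_on_def by (auto simp: add_ac)
qed

lemma module_on_wreath_act:
  "module_on (wreath_car n (Aut :: ('a::ab_group_add \<Rightarrow> 'a) set) id) (wreath_mult (\<circ>)) (id, \<lambda>i. id)
     (power_car n) (\<lambda>a b i. a i + b i) (wreath_act n)"
  unfolding module_on_def
proof (intro conjI ballI)
  fix g g' :: "'a wreath" and a b :: "nat \<Rightarrow> 'a"
  assume g: "g \<in> wreath_car n Aut id" and g': "g' \<in> wreath_car n Aut id"
  show "wreath_act n g a \<in> power_car n"
    by (rule wreath_act_in_power_car)
  show "wreath_act n g (\<lambda>i. a i + b i) = (\<lambda>i. wreath_act n g a i + wreath_act n g b i)"
    using g by (cases g) (simp add: wreath_act_add)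
  show "wreath_act n (wreath_mult (\<circ>) g g') a = wreath_act n g (wreath_act n g' a)"
    using g g' by (cases g, cases g') (simp add: wreath_act_mult mem_wreath_car)
next
  fix a :: "nat \<Rightarrow> 'a" assume "a \<in> power_car n"
  then show "wreath_act n (id, \<lambda>i. id) a = a"
    by (rule wreath_act_one)
qed

lemma strict_2group_target: "strict_2group (target_2group n TYPE('a::ab_group_add))"
  unfolding target_2group_def
  by (rule strict_2group_semidirect_2group[OF group_on_wreath_car ab_group_on_power_car module_on_wreath_act])

lemma target_2group_simps:
  "cOb (target_2group n TYPE('a::ab_group_add)) = wreath_car n Aut id"
  "cAr (target_2group n TYPE('a)) = power_car n \<times> wreath_car n Aut id"
  "cdom (target_2group n TYPE('a)) = snd" "ccod (target_2group n TYPE('a)) = snd"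
  "ccomp (target_2group n TYPE('a)) (b', g') (b, g) = (\<lambda>i. b' i + b i, g)"
  "cid (target_2group n TYPE('a)) g = (\<lambda>i. 0, g)"
  "tob (target_2group n TYPE('a)) = wreath_mult (\<circ>)"
  "tar (target_2group n TYPE('a)) (b, g) (b', g') = (\<lambda>i. b i + wreath_act n g b' i, wreath_mult (\<circ>) g g')"
  "unt (target_2group n TYPE('a)) = (id, \<lambda>i. id)"
  unfolding target_2group_def semidirect_2group_def by simp_all

section \<open>Self-equivalences of the coproduct groupoid\<close>

type_synonym 'a coprod_endo = "(nat \<Rightarrow> nat) \<times> (nat \<times> 'a \<Rightarrow> nat \<times> 'a)"

\<comment> \<open>K is a parameter only so that the vertex group type 'a is fixed throughout the locale.\<close>
locale Sym_coprod =
  fixes n :: nat and K :: "(nat, nat \<times> 'a::ab_group_add) cat"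
  assumes K_def: "K = coprod_grpd n"
begin

abbreviation "S \<equiv> Sym K"

abbreviation "T \<equiv> target_2group n TYPE('a)"

lemma coprod_grpd_simps:
  "cOb K = {..<n}" "cAr K = {f. fst f < n}" "cdom K = fst" "ccod K = fst"
  "ccomp K g f = (fst f, snd g + snd f)" "cid K i = (i, 0)"
  unfolding K_def coprod_grpd_def by simp_all

lemma mem_Sym_ob_coprod:
  "F \<in> cOb S \<longleftrightarrow> self_equiv K (fst F) (snd F)
     \<and> (\<forall>x. \<not> x < n \<longrightarrow> fst F x = undefined) \<and> (\<forall>f. \<not> fst f < n \<longrightarrow> snd F f = undefined)"
  unfolding Sym_def by (simp add: coprod_grpd_simps)

lemma mem_Sym_ar_coprod:
  "(F, G, \<alpha>) \<in> cAr S \<longleftrightarrow> F \<in> cOb S \<and> G \<in> cOb S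
     \<and> nat_iso K K (fst F) (snd F) (fst G) (snd G) \<alpha> \<and> (\<forall>x. \<not> x < n \<longrightarrow> \<alpha> x = undefined)"
  unfolding mem_Sym_ob_coprod unfolding Sym_def by (auto simp: coprod_grpd_simps)

lemma Sym_coprod_simps:
  "cdom S (F, G, \<alpha>) = F" "ccod S (F, G, \<alpha>) = G"
  "ccomp S (G', H, \<beta>) (F, G, \<alpha>) = (F, H, \<lambda>x. if x < n then ccomp K (\<beta> x) (\<alpha> x) else undefined)"
  "cid S F = (F, F, \<lambda>x. if x < n then (fst F x, 0) else undefined)"
  "tob S = fcomp K"
  "fcomp K F G = (\<lambda>x. if x < n then fst F (fst G x) else undefined,
                  \<lambda>f. if fst f < n then snd F (snd G f) else undefined)"
  "tar S (F, F', \<alpha>) (G, G', \<beta>) = (fcomp K F G, fcomp K F' G',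
      \<lambda>x. if x < n then ccomp K (\<alpha> (fst G' x)) (snd F (\<beta> x)) else undefined)"
  "unt S = (\<lambda>x. if x < n then x else undefined, \<lambda>f. if fst f < n then f else undefined)"
  unfolding Sym_def fcomp_def by (simp_all add: coprod_grpd_simps cong: if_cong)

definition Sym_ob_of :: "'a wreath \<Rightarrow> 'a coprod_endo" where
  "Sym_ob_of g = (\<lambda>x. if x < n then fst g x else undefined,
                  \<lambda>f. if fst f < n then (fst g (fst f), snd g (fst f) (snd f)) else undefined)"

definition Sym_ar_of :: "(nat \<Rightarrow> 'a) \<times> 'a wreath \<Rightarrow> 'a coprod_endo \<times> 'a coprod_endo \<times> (nat \<Rightarrow> nat \<times> 'a)" where
  "Sym_ar_of bg = (Sym_ob_of (snd bg), Sym_ob_of (snd bg),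
     \<lambda>x. if x < n then (fst (snd bg) x, fst bg (fst (snd bg) x)) else undefined)"

lemma Sym_ar_of_pair:
  "Sym_ar_of (b, \<sigma>, h) = (Sym_ob_of (\<sigma>, h), Sym_ob_of (\<sigma>, h), \<lambda>x. if x < n then (\<sigma> x, b (\<sigma> x)) else undefined)"
  unfolding Sym_ar_of_def by (simp cong: if_cong)

lemma fcomp_Sym_ob_of:
  assumes "fst g' permutes {..<n}"
  shows "fcomp K (Sym_ob_of g) (Sym_ob_of g') = Sym_ob_of (wreath_mult (\<circ>) g g')"
  unfolding Sym_coprod_simps Sym_ob_of_def wreath_mult_def
  by (auto simp: fun_eq_iff permutes_lessThan_iff[OF assms])

lemma Sym_ob_of_one: "Sym_ob_of (id, \<lambda>i. id) = unt S"
  unfolding Sym_coprod_simps Sym_ob_of_def by (auto simp: fun_eq_iff)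

lemma nat_iso_of_fcomp_eq_unt:
  assumes "fcomp K F G = unt S"
  shows "nat_iso K K (fst F \<circ> fst G) (snd F \<circ> snd G) id id (\<lambda>x. (x, 0))"
proof -
  have "fst F (fst G x) = x" if "x < n" for x
    using arg_cong[OF assms, of "\<lambda>F. fst F x"] that by (simp add: Sym_coprod_simps)
  moreover have "snd F (snd G f) = f" if "fst f < n" for f
    using arg_cong[OF assms, of "\<lambda>F. snd F f"] that by (simp add: Sym_coprod_simps)
  ultimately show ?thesis
    unfolding nat_iso_def nat_trans_def is_iso_def arr_in_def coprod_grpd_simps by auto
qed

lemma functor_Sym_ob_of:
  assumes "g \<in> wreath_car n Aut id"
  shows "functor K K (fst (Sym_ob_of g)) (snd (Sym_ob_of g))"
  using assms unfolding wreath_car_def functor_def arr_in_def coprod_grpd_simps Sym_ob_of_def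
  by (auto simp: permutes_lessThan_iff Aut_zero Aut_add)

lemma Sym_ob_of_in_Sym:
  assumes g: "g \<in> wreath_car n Aut id"
  shows "Sym_ob_of g \<in> cOb S"
proof -
  have "fst g permutes {..<n}" "fst (wreath_inv g) permutes {..<n}"
    using g wreath_inv(1)[OF g] by (auto simp: wreath_car_def)
  then have "fcomp K (Sym_ob_of g) (Sym_ob_of (wreath_inv g)) = unt S"
    "fcomp K (Sym_ob_of (wreath_inv g)) (Sym_ob_of g) = unt S"
    by (simp_all add: fcomp_Sym_ob_of wreath_inv(2,3)[OF g] Sym_ob_of_one)
  then have "self_equiv K (fst (Sym_ob_of g)) (snd (Sym_ob_of g))"
    unfolding self_equiv_def using g wreath_inv(1)[OF g]
    by (blast intro: functor_Sym_ob_of nat_iso_of_fcomp_eq_unt)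
  then show ?thesis
    unfolding mem_Sym_ob_coprod by (simp add: Sym_ob_of_def)
qed

lemma Sym_ar_of_in_Sym:
  assumes b: "b \<in> power_car n" and g: "(\<sigma>, h) \<in> wreath_car n Aut id"
  shows "Sym_ar_of (b, \<sigma>, h) \<in> cAr S"
proof -
  have \<sigma>: "\<sigma> permutes {..<n}"
    using g by (simp add: mem_wreath_car)
  have "nat_iso K K (fst (Sym_ob_of (\<sigma>, h))) (snd (Sym_ob_of (\<sigma>, h)))
      (fst (Sym_ob_of (\<sigma>, h))) (snd (Sym_ob_of (\<sigma>, h))) (\<lambda>x. if x < n then (\<sigma> x, b (\<sigma> x)) else undefined)"
    unfolding nat_iso_def nat_trans_def is_iso_def arr_in_def coprod_grpd_simps Sym_ob_of_def
    by (auto simp: permutes_lessThan_iff[OF \<sigma>] add.commute intro: exI[of _ "- b (\<sigma> _)"])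
  then show ?thesis
    unfolding Sym_ar_of_pair mem_Sym_ar_coprod using Sym_ob_of_in_Sym g by simp
qed

\<comment> \<open>The component of Sym_ar_of (b, \<sigma>, h) at x is b read at the target \<sigma> x; this is the indexing
  under which the twisted tensor (b, g) \<otimes> (b', g') = (b + g \<lhd> b', g g') becomes horizontal composition.\<close>
lemma Sym_ar_of_tar:
  assumes \<sigma>: "\<sigma> permutes {..<n}" "\<sigma>' permutes {..<n}"
  shows "Sym_ar_of (tar T (b, \<sigma>, h) (b', \<sigma>', h')) = tar S (Sym_ar_of (b, \<sigma>, h)) (Sym_ar_of (b', \<sigma>', h'))"
proof -
  have "fcomp K (Sym_ob_of (\<sigma>, h)) (Sym_ob_of (\<sigma>', h')) = Sym_ob_of (\<sigma> \<circ> \<sigma>', \<lambda>i. h (\<sigma>' i) \<circ> h' i)"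
    using \<sigma> by (simp add: fcomp_Sym_ob_of wreath_mult_comp)
  then show ?thesis
    unfolding target_2group_simps Sym_ar_of_pair Sym_coprod_simps(7) wreath_mult_comp wreath_act_pair
    by (auto simp: coprod_grpd_simps fun_eq_iff Sym_ob_of_def permutes_lessThan_iff[OF \<sigma>(1)]
        permutes_lessThan_iff[OF \<sigma>(2)] permutes_inverses[OF \<sigma>(1)])
qed

lemma strict_mon_functor_Sym_of: "strict_mon_functor T S Sym_ob_of Sym_ar_of"
  unfolding strict_mon_functor_def arr_in_def
proof (intro conjI ballI impI)
  fix x assume "x \<in> cOb T"
  then show "Sym_ob_of x \<in> cOb S"
    by (simp add: Sym_ob_of_in_Sym target_2group_simps)
next
  fix f assume "f \<in> cAr T"
  then obtain b \<sigma> h where f: "f = (b, \<sigma>, h)" "b \<in> power_car n" "(\<sigma>, h) \<in> wreath_car n Aut id"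
    by (auto simp: target_2group_simps)
  then show "Sym_ar_of f \<in> cAr S"
    by (simp add: Sym_ar_of_in_Sym)
  show "cdom S (Sym_ar_of f) = Sym_ob_of (cdom T f)" "ccod S (Sym_ar_of f) = Sym_ob_of (ccod T f)"
    by (simp_all add: f Sym_ar_of_pair Sym_coprod_simps target_2group_simps)
next
  fix f g assume "f \<in> cAr T" "g \<in> cAr T" "ccod T f = cdom T g"
  then obtain b b' \<sigma> h where "f = (b, \<sigma>, h)" "g = (b', \<sigma>, h)"
    by (auto simp: target_2group_simps)
  then show "Sym_ar_of (ccomp T g f) = ccomp S (Sym_ar_of g) (Sym_ar_of f)"
    by (auto simp: target_2group_simps Sym_ar_of_pair Sym_coprod_simps coprod_grpd_simps fun_eq_iff)
next
  fix x assume "x \<in> cOb T"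
  then show "Sym_ar_of (cid T x) = cid S (Sym_ob_of x)"
    by (cases x) (auto simp: target_2group_simps Sym_ar_of_pair Sym_coprod_simps Sym_ob_of_def fun_eq_iff)
next
  fix x y assume "x \<in> cOb T" "y \<in> cOb T"
  then have "fst y permutes {..<n}"
    by (cases y) (simp add: target_2group_simps mem_wreath_car)
  then show "Sym_ob_of (tob T x y) = tob S (Sym_ob_of x) (Sym_ob_of y)"
    by (simp add: target_2group_simps fcomp_Sym_ob_of Sym_coprod_simps(5))
next
  fix f g assume "f \<in> cAr T" "g \<in> cAr T"
  then obtain b \<sigma> h b' \<sigma>' h' where "f = (b, \<sigma>, h)" "g = (b', \<sigma>', h')"
    and "\<sigma> permutes {..<n}" "\<sigma>' permutes {..<n}"
    by (auto simp: target_2group_simps wreath_car_def)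
  then show "Sym_ar_of (tar T f g) = tar S (Sym_ar_of f) (Sym_ar_of g)"
    by (simp add: Sym_ar_of_tar)
next
  show "Sym_ob_of (unt T) = unt S"
    by (simp add: target_2group_simps Sym_ob_of_one)
qed

lemma functor_coprodD:
  assumes F: "functor K K Fo Fm" and i: "i < n"
  shows "Fo i < n" "Fm (i, a) = (Fo i, snd (Fm (i, a)))"
    "snd (Fm (i, a + b)) = snd (Fm (i, a)) + snd (Fm (i, b))"
proof -
  note F' = F[unfolded functor_def arr_in_def coprod_grpd_simps]
  show "Fo i < n" "Fm (i, a) = (Fo i, snd (Fm (i, a)))"
    using F' i by (auto simp: prod_eq_iff)
  have "Fm (ccomp K (i, a) (i, b)) = ccomp K (Fm (i, a)) (Fm (i, b))"
    using F' i by (auto simp: coprod_grpd_simps)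
  then show "snd (Fm (i, a + b)) = snd (Fm (i, a)) + snd (Fm (i, b))"
    by (simp add: coprod_grpd_simps)
qed

lemma nat_iso_coprod_idD:
  assumes \<alpha>: "nat_iso K K (Go \<circ> Fo) (Gm \<circ> Fm) id id \<alpha>" and i: "i < n"
  shows "Go (Fo i) = i" "snd (Gm (Fm (i, a))) = a"
proof -
  note \<alpha>' = \<alpha>[unfolded nat_iso_def nat_trans_def arr_in_def coprod_grpd_simps]
  show "Go (Fo i) = i"
    using \<alpha>' i by (simp add: coprod_grpd_simps) (metis lessThan_iff)
  have "ccomp K (\<alpha> i) (Gm (Fm (i, a))) = ccomp K (i, a) (\<alpha> i)"
    using \<alpha>' i by (auto simp: coprod_grpd_simps)
  \<comment> \<open>A is abelian, so this naturality square says that Gm (Fm (i, a)) and (i, a) have the same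
    second component.\<close>
  then show "snd (Gm (Fm (i, a))) = a"
    by (simp add: coprod_grpd_simps add.commute)
qed

lemma self_equiv_coprod_wreath:
  assumes "self_equiv K Fo Fm"
  shows "(\<lambda>x. if x < n then Fo x else x, \<lambda>i. if i < n then (\<lambda>a. snd (Fm (i, a))) else id)
    \<in> wreath_car n Aut id"
proof -
  obtain Go Gm \<alpha> \<beta> where F: "functor K K Fo Fm" and G: "functor K K Go Gm"
    and \<alpha>: "nat_iso K K (Go \<circ> Fo) (Gm \<circ> Fm) id id \<alpha>"
    and \<beta>: "nat_iso K K (Fo \<circ> Go) (Fm \<circ> Gm) id id \<beta>"
    using assms unfolding self_equiv_def by blast
  note F' = functor_coprodD[OF F] and G' = functor_coprodD[OF G]
    and \<alpha>' = nat_iso_coprod_idD[OF \<alpha>] and \<beta>' = nat_iso_coprod_idD[OF \<beta>]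
  have "(\<lambda>x. if x < n then Fo x else x) permutes {..<n}"
    by (rule bij_imp_permutes, rule bij_betw_byWitness[where f' = Go]) (auto simp: F' G' \<alpha>' \<beta>')
  moreover have "(\<lambda>a. snd (Fm (i, a))) \<in> Aut" if i: "i < n" for i
  proof -
    have "snd (Fm (i, snd (Gm (Fo i, a)))) = a" for a
      using G'(2)[OF F'(1)[OF i], of a] \<alpha>'(1)[OF i] \<beta>'(2)[OF F'(1)[OF i], of a] by simp
    moreover have "snd (Gm (Fo i, snd (Fm (i, a)))) = a" for a
      using F'(2)[OF i, of a] \<alpha>'(2)[OF i, of a] by simp
    ultimately have "bij (\<lambda>a. snd (Fm (i, a)))"
      by (intro o_bij[of "\<lambda>a. snd (Gm (Fo i, a))"]) (auto simp: fun_eq_iff)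
    then show ?thesis
      unfolding Aut_def using F'(3)[OF i] by blast
  qed
  ultimately show ?thesis
    unfolding mem_wreath_car by (simp add: id_in_Aut)
qed

lemma Sym_ob_of_surj:
  assumes "F \<in> cOb S"
  shows "\<exists>g\<in>wreath_car n Aut id. F = Sym_ob_of g"
proof -
  obtain Fo Fm where F: "F = (Fo, Fm)"
    by (cases F)
  have equiv: "self_equiv K Fo Fm" and Fo: "\<And>x. \<not> x < n \<Longrightarrow> Fo x = undefined"
    and Fm: "\<And>f. \<not> fst f < n \<Longrightarrow> Fm f = undefined"
    using assms unfolding mem_Sym_ob_coprod F by auto
  have "F = Sym_ob_of (\<lambda>x. if x < n then Fo x else x, \<lambda>i. if i < n then (\<lambda>a. snd (Fm (i, a))) else id)"
    unfolding F Sym_ob_of_def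
    using Fo Fm functor_coprodD(2)[OF equiv[unfolded self_equiv_def, THEN conjunct1]]
    by (auto simp: fun_eq_iff)
  then show ?thesis
    using self_equiv_coprod_wreath[OF equiv] by blast
qed

lemma inj_on_Sym_ob_of: "inj_on Sym_ob_of (wreath_car n Aut id)"
proof (rule inj_onI)
  fix g g' assume g: "g \<in> wreath_car n Aut id" and g': "g' \<in> wreath_car n Aut id"
    and eq: "Sym_ob_of g = Sym_ob_of g'"
  obtain \<sigma> h \<sigma>' h' where gg': "g = (\<sigma>, h)" "g' = (\<sigma>', h')"
    by (cases g, cases g')
  have "\<sigma> x = \<sigma>' x" if "x < n" for x
    using arg_cong[OF eq, of "\<lambda>F. fst F x"] that by (simp add: gg' Sym_ob_of_def)
  then have "\<sigma> = \<sigma>'"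
    using g g' unfolding gg' mem_wreath_car by (metis ext lessThan_iff permutes_not_in)
  moreover have "h i a = h' i a" if "i < n" for i a
    using arg_cong[OF eq, of "\<lambda>F. snd F (i, a)"] that by (simp add: gg' Sym_ob_of_def)
  then have "h = h'"
    using g g' unfolding gg' mem_wreath_car by (metis ext not_le)
  ultimately show "g = g'"
    by (simp add: gg')
qed

lemma Sym_ar_of_surj:
  assumes f: "f \<in> cAr S"
  shows "\<exists>b\<in>power_car n. \<exists>g\<in>wreath_car n Aut id. f = Sym_ar_of (b, g)"
proof -
  obtain F G \<alpha> where f_eq: "f = (F, G, \<alpha>)"
    by (cases f)
  have "F \<in> cOb S" "G \<in> cOb S" and nat_iso_\<alpha>: "nat_iso K K (fst F) (snd F) (fst G) (snd G) \<alpha>"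
    and \<alpha>_undef: "\<And>x. \<not> x < n \<Longrightarrow> \<alpha> x = undefined"
    using f unfolding f_eq mem_Sym_ar_coprod by auto
  then obtain \<sigma> h \<sigma>' h' where g: "(\<sigma>, h) \<in> wreath_car n Aut id" "(\<sigma>', h') \<in> wreath_car n Aut id"
    and F: "F = Sym_ob_of (\<sigma>, h)" and G: "G = Sym_ob_of (\<sigma>', h')"
    using Sym_ob_of_surj by (metis surj_pair)
  have \<sigma>: "\<sigma> permutes {..<n}"
    using g by (simp add: mem_wreath_car)
  note \<alpha>_arr = nat_iso_\<alpha>[unfolded nat_iso_def nat_trans_def, THEN conjunct1, THEN conjunct1]
    and \<alpha>_nat = nat_iso_\<alpha>[unfolded nat_iso_def nat_trans_def, THEN conjunct1, THEN conjunct2]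
  have \<alpha>_fst: "fst (\<alpha> x) = \<sigma> x" "\<sigma> x = \<sigma>' x" if "x < n" for x
    using bspec[OF \<alpha>_arr, of x] that
    by (simp_all add: arr_in_def coprod_grpd_simps F G Sym_ob_of_def)
  \<comment> \<open>As in nat_iso_coprod_idD, commutativity of A forces the two automorphism families to agree.\<close>
  moreover have "h i a = h' i a" if "i < n" for i a
    using bspec[OF \<alpha>_nat, of "(i, a)"] that
    by (simp add: coprod_grpd_simps F G Sym_ob_of_def add.commute)
  ultimately have "G = F"
    unfolding F G Sym_ob_of_def by (auto simp: fun_eq_iff)
  define b where "b j = (if j < n then snd (\<alpha> (inv \<sigma> j)) else 0)" for j
  have "\<alpha> = (\<lambda>x. if x < n then (\<sigma> x, b (\<sigma> x)) else undefined)"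
    using \<alpha>_undef \<alpha>_fst(1)
    by (auto simp: fun_eq_iff b_def permutes_lessThan_iff[OF \<sigma>] permutes_inverses[OF \<sigma>] prod_eq_iff)
  then have "f = Sym_ar_of (b, \<sigma>, h)"
    unfolding f_eq \<open>G = F\<close> F Sym_ar_of_pair by simp
  moreover have "b \<in> power_car n"
    unfolding power_car_def b_def by simp
  ultimately show ?thesis
    using g by blast
qed

lemma inj_on_Sym_ar_of: "inj_on Sym_ar_of (cAr T)"
proof (rule inj_onI)
  fix f f' assume "f \<in> cAr T" "f' \<in> cAr T" and eq: "Sym_ar_of f = Sym_ar_of f'"
  then obtain b \<sigma> h b' g' where ff': "f = (b, \<sigma>, h)" "f' = (b', g')"
    and b: "b \<in> power_car n" "b' \<in> power_car n"
    and g: "(\<sigma>, h) \<in> wreath_car n Aut id" "g' \<in> wreath_car n Aut id"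
    by (auto simp: target_2group_simps)
  have "Sym_ob_of (\<sigma>, h) = Sym_ob_of g'"
    using arg_cong[OF eq, of fst] unfolding ff' Sym_ar_of_def by simp
  then have g': "g' = (\<sigma>, h)"
    using inj_on_Sym_ob_of g by (auto dest: inj_onD)
  have \<sigma>: "\<sigma> permutes {..<n}"
    using g by (simp add: mem_wreath_car)
  have "(\<lambda>x. if x < n then (\<sigma> x, b (\<sigma> x)) else undefined) = (\<lambda>x. if x < n then (\<sigma> x, b' (\<sigma> x)) else undefined)"
    using arg_cong[OF eq, of "\<lambda>F. snd (snd F)"] unfolding ff' g' Sym_ar_of_pair by simp
  then have "b (\<sigma> x) = b' (\<sigma> x)" if "x < n" for x
    using that by (metis (mono_tags, lifting) snd_conv)
  then have "b x = b' x" for x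
    using b unfolding power_car_def
    by (cases "x < n") (metis permutes_inverses(1)[OF \<sigma>] permutes_lessThan_iff[OF permutes_inv[OF \<sigma>]], simp)
  then show "f = f'"
    unfolding ff' g' by auto
qed

lemma bij_betw_Sym_ob_of: "bij_betw Sym_ob_of (cOb T) (cOb S)"
  unfolding bij_betw_def target_2group_simps
  using inj_on_Sym_ob_of Sym_ob_of_in_Sym Sym_ob_of_surj by blast

lemma bij_betw_Sym_ar_of: "bij_betw Sym_ar_of (cAr T) (cAr S)"
  unfolding bij_betw_def
proof (intro conjI inj_on_Sym_ar_of equalityI subsetI)
  show "f \<in> cAr S" if "f \<in> Sym_ar_of ` cAr T" for f
    using that by (auto simp: target_2group_simps Sym_ar_of_in_Sym)
  show "f \<in> Sym_ar_of ` cAr T" if "f \<in> cAr S" for f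
    using Sym_ar_of_surj[OF that] by (force simp: target_2group_simps)
qed

end

theorem proposition4p15:
  fixes n :: nat
  assumes "n \<ge> 1"
  shows "equiv_2group (Sym (coprod_grpd n :: (nat, nat \<times> 'a::ab_group_add) cat))
                      (target_2group n TYPE('a))"
proof -
  interpret Sym_coprod n "coprod_grpd n :: (nat, nat \<times> 'a) cat"
    by unfold_locales (rule refl)
  show ?thesis
    using equiv_2group_of_bij_strict_mon_functor[OF strict_2group_target strict_mon_functor_Sym_of
      bij_betw_Sym_ob_of bij_betw_Sym_ar_of] .
qed

end
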